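(* For a positive integer $d$, the number of primitive $(d,d)$-necklaces is odd if and only if $d$ is squarefree.
   Context: A $(d,d)$-necklace is a circular arrangement of $d$ white and $d$ black beads modulo cyclic rotation; it is primitive if its orbit under rotation has exactly $2d$ elements. *)

theory Defs
  imports Main "HOL-Computational_Algebra.Squarefree"
begin

text \<open>Binary words of length 2d with exactly d white beads (True = white, False = black).\<close>
definition balanced_words :: "nat \<Rightarrow> bool list set" where
  "balanced_words d = {w. length w = 2 * d \<and> length (filter id w) = d}"

definition rot_orbit :: "bool list \<Rightarrow> bool list set" where
  "rot_orbit w = {rotate k w | k. k < length w}"

definition necklaces :: "nat \<Rightarrow> bool list set set" where
  "necklaces d = rot_orbit ` balanced_words d"

definition primitive_necklaces :: "nat \<Rightarrow> bool list set set" where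
  "primitive_necklaces d = {N \<in> necklaces d. card N = 2 * d}"

end

(*
  Swapping the two colours is an involution on primitive (d,d)-necklaces, so their number
  has the parity of the number of self-complementary ones. These are the orbits of the
  primitive antiperiodic words: words w of length 2d and period 2d with rotate d w = map Not w.

  An antiperiodic word of length 2n is determined by its first half, so there are 2^n of
  them. Its period is 2e for some e dividing n with n/e odd, and it is the periodic extension
  of a primitive antiperiodic word of length 2e. Counting orbits gives
  sum over such e of 2e N(e) = 2^n, where N(e) is the number of primitive antiperiodic
  necklaces. For n = 2^a m with m odd this says that sum over g dividing m of N(2^a g) is odd
  iff a <= 1 and m = 1. Since a number m > 1 has an even number of squarefree divisors,
  Moebius inversion modulo 2 turns this into: N(2^a m) is odd iff a <= 1 and m is squarefree,
  i.e. iff n is squarefree.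
*)

theory Submission
  imports Defs "HOL-Combinatorics.Cycles" "HOL-Library.Z2"
begin

section \<open>Parity and divisors\<close>

lemma even_card_if_fixpoint_free_involution:
  assumes "\<And>x. x \<in> X \<Longrightarrow> h x \<in> X" "\<And>x. x \<in> X \<Longrightarrow> h (h x) = x"
    and "\<And>x. x \<in> X \<Longrightarrow> h x \<noteq> x"
  shows "even (card X)"
proof -
  \<comment> \<open>in the field \<open>bit\<close> of two elements each pair \<open>{x, h x}\<close> contributes \<open>1 + 1 = 0\<close>\<close>
  have "(\<Sum>x\<in>X. 1 :: bit) = 0"
    by (rule sum_involution_eq_0[where h = h]) (use assms in auto)
  then have "even (of_nat (card X) :: bit)" by simp
  then show ?thesis by (simp only: even_of_nat_iff)
qed

lemma even_card_iff_even_card_fixpoints: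
  assumes "finite X" "\<And>x. x \<in> X \<Longrightarrow> h x \<in> X" "\<And>x. x \<in> X \<Longrightarrow> h (h x) = x"
  shows "even (card X) \<longleftrightarrow> even (card {x\<in>X. h x = x})"
proof -
  have "card X = card {x\<in>X. h x = x} + card {x\<in>X. h x \<noteq> x}"
    using assms(1) by (subst card_Un_disjoint[symmetric]) (auto intro: arg_cong[where f = card])
  moreover have "even (card {x\<in>X. h x \<noteq> x})"
    by (rule even_card_if_fixpoint_free_involution[where h = h]) (use assms in auto)
  ultimately show ?thesis by simp
qed

lemma even_card_squarefree_divisors:
  fixes m :: nat
  assumes "1 < m"
  shows "even (card {g. g dvd m \<and> squarefree g})"
proof -
  obtain q where q: "prime q" "q dvd m"
    using prime_factor_nat[of m] assms by auto
  define h where "h g = (if q dvd g then g div q else g * q)" for g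
  have "h g \<in> {g. g dvd m \<and> squarefree g} \<and> h (h g) = g \<and> h g \<noteq> g"
    if g: "g \<in> {g. g dvd m \<and> squarefree g}" for g
  proof -
    have "0 < g"
      using g assms by (auto intro: Nat.gr0I)
    show ?thesis
    proof (cases "q dvd g")
      case True
      then obtain k where k: "g = q * k" ..
      have "\<not> q dvd k"
      proof
        assume "q dvd k"
        then have "q ^ 2 dvd g"
          using k by (simp add: power2_eq_square mult_dvd_mono)
        then show False
          using g q(1) squarefreeD[of g q] by auto
      qed
      then show ?thesis
        using g k q(1) \<open>0 < g\<close> prime_gt_1_nat[OF q(1)]
        by (auto simp: h_def intro: dvd_mult_right[THEN dvd_trans] squarefree_mono[of k g])
    next
      case False
      then have "coprime g q"
        using prime_imp_coprime[OF q(1)] by (simp add: coprime_commute)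
      then have "g * q dvd m" "squarefree (g * q)"
        using g q by (simp_all add: divides_mult squarefree_mult_coprime squarefree_prime)
      then show ?thesis
        using False \<open>0 < g\<close> prime_gt_1_nat[OF q(1)] by (simp add: h_def)
    qed
  qed
  then show ?thesis
    by (intro even_card_if_fixpoint_free_involution[where h = h]) blast+
qed

lemma even_card_proper_squarefree_divisors_iff:
  fixes m :: nat
  assumes "1 < m"
  shows "even (card {g. g dvd m \<and> g \<noteq> m \<and> squarefree g}) \<longleftrightarrow> \<not> squarefree m"
proof -
  let ?S = "{g. g dvd m \<and> g \<noteq> m \<and> squarefree g}"
  have "{g. g dvd m \<and> squarefree g} = (if squarefree m then insert m ?S else ?S)"
    by auto
  moreover have "finite ?S"
  proof (rule finite_subset)
    show "?S \<subseteq> {g. g dvd m}" by auto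
    show "finite {g. g dvd m}" using assms by simp
  qed
  ultimately show ?thesis
    using even_card_squarefree_divisors[OF assms] by (cases "squarefree m") simp_all
qed

lemma odd_iff_squarefree_if_odd_divisor_sums:
  fixes T :: "nat \<Rightarrow> nat"
  assumes "0 < n"
    and sums: "\<And>m. m dvd n \<Longrightarrow> odd (\<Sum>g | g dvd m. T g) \<longleftrightarrow> P \<and> m = 1"
  shows "m dvd n \<Longrightarrow> odd (T m) \<longleftrightarrow> P \<and> squarefree m"
proof (induction m rule: less_induct)
  case (less m)
  have "0 < m"
    using less.prems assms(1) by (auto intro: Nat.gr0I)
  show ?case
  proof (cases "m = 1")
    case True
    then show ?thesis using sums[OF less.prems] by simp
  next
    case False
    let ?D = "{g. g dvd m \<and> g \<noteq> m}"
    have "finite ?D"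
      using \<open>0 < m\<close> by simp
    have IH: "odd (T g) \<longleftrightarrow> P \<and> squarefree g" if "g \<in> ?D" for g
    proof -
      have "g < m"
        using that \<open>0 < m\<close> by (auto dest: dvd_imp_le)
      then show ?thesis
        using that less.IH less.prems by (auto intro: dvd_trans)
    qed
    have "{g. g dvd m} = insert m ?D"
      by auto
    then have "(\<Sum>g | g dvd m. T g) = T m + (\<Sum>g\<in>?D. T g)"
      using \<open>finite ?D\<close> by simp
    moreover have "even (\<Sum>g | g dvd m. T g)"
      using sums[OF less.prems] False by simp
    moreover have "even (\<Sum>g\<in>?D. T g) \<longleftrightarrow> \<not> P \<or> even (card {g\<in>?D. squarefree g})"
    proof -
      have "{g\<in>?D. odd (T g)} = (if P then {g\<in>?D. squarefree g} else {})"
        using IH by auto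
      then show ?thesis
        using \<open>finite ?D\<close> by (simp add: even_sum_iff)
    qed
    moreover have "even (card {g\<in>?D. squarefree g}) \<longleftrightarrow> \<not> squarefree m"
      using even_card_proper_squarefree_divisors_iff[of m] False \<open>0 < m\<close> by simp
    ultimately show ?thesis
      by auto
  qed
qed

lemma odd_cofactor_divisors_eq_image:
  fixes m :: nat
  assumes "odd m"
  shows "{e. e dvd 2 ^ a * m \<and> odd (2 ^ a * m div e)} = (\<lambda>g. 2 ^ a * g) ` {g. g dvd m}"
proof (intro set_eqI iffI)
  fix e assume e: "e \<in> {e. e dvd 2 ^ a * m \<and> odd (2 ^ a * m div e)}"
  then obtain k where k: "2 ^ a * m = e * k"
    by (auto elim!: dvdE)
  moreover have "e \<noteq> 0"
    using e by (cases "e = 0") simp_all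
  ultimately have "odd k"
    using e by simp
  then have "coprime (2 ^ a) k"
    by simp
  moreover have "2 ^ a dvd e * k"
    by (simp flip: k)
  ultimately have "2 ^ a dvd e"
    by (simp add: coprime_dvd_mult_left_iff)
  then obtain g where "e = 2 ^ a * g" ..
  with k have "g dvd m"
    by (simp add: mult.assoc)
  then show "e \<in> (\<lambda>g. 2 ^ a * g) ` {g. g dvd m}"
    using \<open>e = 2 ^ a * g\<close> by blast
next
  fix e assume "e \<in> (\<lambda>g. 2 ^ a * g) ` {g. g dvd m}"
  then obtain g k where "e = 2 ^ a * g" "m = g * k"
    by (auto elim!: dvdE)
  moreover have "0 < g" "odd k"
    using assms \<open>m = g * k\<close> by (auto intro: Nat.gr0I)
  ultimately show "e \<in> {e. e dvd 2 ^ a * m \<and> odd (2 ^ a * m div e)}"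
    by (simp add: mult.assoc)
qed

lemma power2_mult_eq_power2_odd_iff:
  fixes x :: nat
  assumes "2 ^ k * x = 2 ^ n"
  shows "odd x \<longleftrightarrow> n = k"
proof -
  have "x dvd 2 ^ n"
    using assms by (metis dvd_triv_right)
  then obtain j where "x = 2 ^ j"
    using divides_primepow_nat[OF two_is_prime_nat] by blast
  with assms have "n = k + j"
    by (simp flip: power_add)
  then show ?thesis
    using \<open>x = 2 ^ j\<close> by simp
qed

lemma power2_mult_eq_Suc_iff:
  fixes m :: nat
  assumes "0 < m"
  shows "2 ^ a * m = a + 1 \<longleftrightarrow> a \<le> 1 \<and> m = 1"
proof
  assume eq: "2 ^ a * m = a + 1"
  show "a \<le> 1 \<and> m = 1"
  proof
    show "m = 1"
    proof (rule ccontr)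
      assume "m \<noteq> 1"
      then have "2 ^ a * 2 \<le> 2 ^ a * m"
        using assms by simp
      then show False
        using eq Suc_leI[OF less_exp[of a]] by simp
    qed
    have "a + 1 < 2 ^ a" if "2 \<le> a"
      using that by (induction a rule: dec_induct) simp_all
    then show "a \<le> 1"
      using eq \<open>m = 1\<close> by fastforce
  qed
next
  show "a \<le> 1 \<and> m = 1 \<Longrightarrow> 2 ^ a * m = a + 1"
    by (cases a) auto
qed

lemma squarefree_power2_mult_iff:
  fixes m :: nat
  assumes "odd m"
  shows "squarefree (2 ^ a * m) \<longleftrightarrow> a \<le> 1 \<and> squarefree m"
proof -
  have "squarefree ((2::nat) ^ a) \<longleftrightarrow> a \<le> 1"
    using squarefree_prime[OF two_is_prime_nat] by (auto simp: squarefree_power_iff)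
  moreover have "coprime (2 ^ a) m"
    using assms by simp
  ultimately show ?thesis
    using squarefree_mult_coprime squarefree_multD by blast
qed

section \<open>Rotation periods of words\<close>

definition rotation_period :: "'a list \<Rightarrow> nat" where
  "rotation_period w = least_power rotate1 w"

lemma rotate_eq_funpow_rotate1: "rotate k w = (rotate1 ^^ k) w"
  by (simp add: rotate_def)

lemma rotation_period_pos: "w \<noteq> [] \<Longrightarrow> 0 < rotation_period w"
  unfolding rotation_period_def
  by (rule least_powerI(2)[where f = rotate1 and n = "length w"])
    (simp_all flip: rotate_eq_funpow_rotate1)

lemma rotate_mult_eq_self: "rotate p w = w \<Longrightarrow> rotate (p * t) w = w"
  by (induction t) (simp_all add: rotate_rotate[symmetric] add.commute)

lemma rotate_eq_self_iff:
  assumes "w \<noteq> []"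
  shows "rotate k w = w \<longleftrightarrow> rotation_period w dvd k"
proof
  assume "rotate k w = w"
  then show "rotation_period w dvd k"
    unfolding rotation_period_def rotate_eq_funpow_rotate1 by (rule least_power_minimal)
next
  have "rotate (rotation_period w) w = w"
    unfolding rotation_period_def rotate_eq_funpow_rotate1
    by (rule least_powerI(1)[where f = rotate1 and n = "length w"])
      (simp_all add: assms flip: rotate_eq_funpow_rotate1)
  then have "rotate (rotation_period w * t) w = w" for t
    by (rule rotate_mult_eq_self)
  then show "rotation_period w dvd k \<Longrightarrow> rotate k w = w" by blast
qed

lemma rotation_period_eqI:
  assumes "v \<noteq> []" "w \<noteq> []" "\<And>k. rotate k v = v \<longleftrightarrow> rotate k w = w"
  shows "rotation_period v = rotation_period w"
  using assms by (simp add: rotate_eq_self_iff) (meson dvd_antisym dvd_refl)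

lemma rotation_period_dvd_length: "w \<noteq> [] \<Longrightarrow> rotation_period w dvd length w"
  by (simp flip: rotate_eq_self_iff)

lemma rotate_mod_rotation_period:
  assumes "w \<noteq> []"
  shows "rotate (k mod rotation_period w) w = rotate k w"
proof -
  let ?p = "rotation_period w"
  have "rotate k w = rotate (k mod ?p) (rotate (?p * (k div ?p)) w)"
    by (simp add: rotate_rotate)
  also have "rotate (?p * (k div ?p)) w = w"
    using rotate_eq_self_iff[OF assms] by simp
  finally show ?thesis by simp
qed

lemma rot_orbit_eq_range: "w \<noteq> [] \<Longrightarrow> rot_orbit w = range (\<lambda>k. rotate k w)"
proof -
  assume "w \<noteq> []"
  then have "rotate k w \<in> rot_orbit w" for k
    unfolding rot_orbit_def
    by (intro CollectI exI[of _ "k mod length w"]) (simp add: rotate_conv_mod[of k w])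
  then show ?thesis unfolding rot_orbit_def by auto
qed

lemma rot_orbit_eq_image_period:
  assumes "w \<noteq> []"
  shows "rot_orbit w = (\<lambda>k. rotate k w) ` {..<rotation_period w}"
  using rotate_mod_rotation_period[OF assms] rotation_period_pos[OF assms]
  by (auto simp: rot_orbit_eq_range[OF assms]
      intro!: image_eqI[of _ _ "k mod rotation_period w" for k])

lemma card_rot_orbit:
  assumes "w \<noteq> []"
  shows "card (rot_orbit w) = rotation_period w"
proof -
  have "i = j" if "i \<le> j" "j < rotation_period w" "rotate i w = rotate j w" for i j
  proof -
    have "rotate (j - i) w = w"
      using funpow_diff[OF inj_rotate1 that(1)] that(3) by (simp add: rotate_eq_funpow_rotate1)
    then show "i = j"
      using that(1,2) by (auto simp: rotate_eq_self_iff[OF assms] dest: dvd_imp_le)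
  qed
  then have "inj_on (\<lambda>k. rotate k w) {..<rotation_period w}"
    by (metis inj_onI lessThan_iff nat_le_linear)
  then show ?thesis
    by (simp add: rot_orbit_eq_image_period[OF assms] card_image)
qed

lemma self_in_rot_orbit: "w \<noteq> [] \<Longrightarrow> w \<in> rot_orbit w"
  using rot_orbit_eq_range[of w] by (auto intro: range_eqI[of _ _ 0])

lemma rot_orbit_rotate: "w \<noteq> [] \<Longrightarrow> rot_orbit (rotate k w) = rot_orbit w"
proof -
  assume ne: "w \<noteq> []"
  have "rotate i w = rotate (i + length w * k - k) (rotate k w)" for i
  proof -
    have "1 \<le> length w" using ne by (simp add: Suc_le_eq)
    then have "k \<le> length w * k" by simp
    then have "i + length w * k - k + k = i + length w * k" by arith
    then show ?thesis by (metis rotate_rotate rotate_conv_mod mod_mult_self2)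
  qed
  then show ?thesis
    using ne by (auto simp: rot_orbit_eq_range rotate_rotate)
qed

lemma rot_orbit_eqI: "w \<noteq> [] \<Longrightarrow> v \<in> rot_orbit w \<Longrightarrow> rot_orbit v = rot_orbit w"
  using rot_orbit_rotate unfolding rot_orbit_def by blast

lemma rotate_eq_rotate_iff: "rotate k x = rotate k y \<longleftrightarrow> x = y"
  unfolding rotate_def by (rule inj_eq[OF inj_fn[OF inj_rotate1]])

lemma rotation_period_rotate:
  assumes "w \<noteq> []"
  shows "rotation_period (rotate k w) = rotation_period w"
proof -
  have "rotate j (rotate k w) = rotate k w \<longleftrightarrow> rotate j w = w" for j
    by (metis rotate_eq_rotate_iff rotate_rotate add.commute)
  then show ?thesis
    using assms by (intro rotation_period_eqI) simp_all
qed

lemma length_filter_rotate: "length (filter P (rotate k xs)) = length (filter P xs)"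
proof -
  let ?j = "k mod length xs"
  have "length (filter P (rotate k xs)) = length (filter P (drop ?j xs @ take ?j xs))"
    by (simp add: rotate_drop_take)
  also have "\<dots> = length (filter P (take ?j xs @ drop ?j xs))"
    by (simp only: filter_append length_append add.commute)
  finally show ?thesis
    by simp
qed

lemma rotation_period_map_inj:
  assumes "inj f" "w \<noteq> []"
  shows "rotation_period (map f w) = rotation_period w"
proof -
  have "rotate k (map f w) = map f w \<longleftrightarrow> rotate k w = w" for k
    using assms(1) by (simp add: rotate_map inj_map_eq_map)
  then show ?thesis
    using assms(2) by (intro rotation_period_eqI) simp_all
qed

lemma card_eq_rotation_period_times_card_orbits:
  assumes "finite A" and closed: "\<And>w k. w \<in> A \<Longrightarrow> rotate k w \<in> A"
    and period: "\<And>w. w \<in> A \<Longrightarrow> w \<noteq> [] \<and> rotation_period w = p"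
  shows "card A = p * card (rot_orbit ` A)"
proof -
  have "rot_orbit w \<subseteq> A" if "w \<in> A" for w
    using closed that by (auto simp: rot_orbit_def)
  then have "\<Union> (rot_orbit ` A) = A"
    using period self_in_rot_orbit by blast
  moreover have "p * card (rot_orbit ` A) = card (\<Union> (rot_orbit ` A))"
  proof (rule card_partition)
    show "finite (rot_orbit ` A)" using assms(1) by simp
    show "finite (\<Union> (rot_orbit ` A))" using assms(1) \<open>\<Union> (rot_orbit ` A) = A\<close> by simp
    show "card C = p" if "C \<in> rot_orbit ` A" for C
      using that period card_rot_orbit by auto
    show "C1 \<inter> C2 = {}"
      if C1: "C1 \<in> rot_orbit ` A" and C2: "C2 \<in> rot_orbit ` A" and ne: "C1 \<noteq> C2" for C1 C2
    proof -
      obtain w1 w2 where "w1 \<in> A" "w2 \<in> A" "C1 = rot_orbit w1" "C2 = rot_orbit w2"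
        using C1 C2 by blast
      then show ?thesis
        using ne period rot_orbit_eqI by blast
    qed
  qed
  ultimately show ?thesis by simp
qed

section \<open>Periodic extensions and antiperiodic words\<close>

definition periodic_ext :: "nat \<Rightarrow> 'a list \<Rightarrow> 'a list" where
  "periodic_ext n r = map (\<lambda>i. r ! (i mod length r)) [0..<n]"

lemma length_periodic_ext [simp]: "length (periodic_ext n r) = n"
  by (simp add: periodic_ext_def)

lemma nth_periodic_ext [simp]: "i < n \<Longrightarrow> periodic_ext n r ! i = r ! (i mod length r)"
  by (simp add: periodic_ext_def)

lemma take_periodic_ext: "length r \<le> n \<Longrightarrow> take (length r) (periodic_ext n r) = r"
  by (simp add: list_eq_iff_nth_eq)

lemma periodic_ext_eq_iff:
  assumes "length r = length s" "length r \<le> n"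
  shows "periodic_ext n r = periodic_ext n s \<longleftrightarrow> r = s"
  using take_periodic_ext[of r n] take_periodic_ext[of s n] assms by metis

lemma periodic_ext_take:
  assumes "rotate p w = w" "p dvd length w"
  shows "periodic_ext (length w) (take p w) = w"
proof (cases "w = []")
  case False
  then have "0 < p" "p \<le> length w"
    using assms(2) by (auto intro: dvd_imp_le Nat.gr0I)
  have "w ! i = w ! (i mod p)" if "i < length w" for i
  proof -
    have "rotate (p * (i div p)) w = w"
      using assms(1) by (rule rotate_mult_eq_self)
    then have "w ! (i mod p) = w ! ((p * (i div p) + i mod p) mod length w)"
      by (metis nth_rotate \<open>0 < p\<close> \<open>p \<le> length w\<close> mod_less_divisor order_less_le_trans)
    then show ?thesis using that by simp
  qed
  moreover have "length (take p w) = p"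
    using \<open>p \<le> length w\<close> by simp
  ultimately show ?thesis
    using \<open>0 < p\<close> by (intro nth_equalityI) simp_all
qed (simp add: periodic_ext_def)

lemma rotate_periodic_ext:
  assumes "length r dvd n"
  shows "rotate k (periodic_ext n r) = periodic_ext n (rotate k r)"
proof (cases "n = 0")
  case False
  then have "r \<noteq> []" using assms by auto
  have "r ! ((k + i) mod n mod length r) = r ! ((k + i mod length r) mod length r)" for i
    using assms by (simp add: mod_mod_cancel mod_add_right_eq)
  then show ?thesis
    using False \<open>r \<noteq> []\<close> by (intro nth_equalityI) (simp_all add: nth_rotate)
qed (simp add: periodic_ext_def)

lemma map_periodic_ext: "r \<noteq> [] \<Longrightarrow> map f (periodic_ext n r) = periodic_ext n (map f r)"
  by (simp add: periodic_ext_def)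

lemma rotation_period_periodic_ext:
  assumes "r \<noteq> []" "length r dvd n" "0 < n"
  shows "rotation_period (periodic_ext n r) = rotation_period r"
proof -
  have "length r \<le> n"
    using assms by (simp add: dvd_imp_le)
  have "length (periodic_ext n r) > 0"
    using assms(3) by simp
  then have "periodic_ext n r \<noteq> []"
    by (rule length_greater_0_conv[THEN iffD1])
  have "rotate k (periodic_ext n r) = periodic_ext n r \<longleftrightarrow> rotate k r = r" for k
    using assms(2) \<open>length r \<le> n\<close> by (simp add: rotate_periodic_ext periodic_ext_eq_iff)
  then show ?thesis
    using assms(1) \<open>periodic_ext n r \<noteq> []\<close> by (intro rotation_period_eqI) simp_all
qed

definition antiperiodic_words :: "nat \<Rightarrow> bool list set" where
  "antiperiodic_words n = {w. length w = 2 * n \<and> rotate n w = map Not w}"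

definition primitive_antiperiodic_words :: "nat \<Rightarrow> bool list set" where
  "primitive_antiperiodic_words n = {w \<in> antiperiodic_words n. rotation_period w = 2 * n}"

lemma antiperiodic_words_eq_image:
  "antiperiodic_words n = (\<lambda>u. u @ map Not u) ` {u. length u = n}"
proof (intro set_eqI iffI)
  fix w assume "w \<in> antiperiodic_words n"
  then have len: "length w = 2 * n" and rot: "rotate n w = map Not w"
    by (auto simp: antiperiodic_words_def)
  define u v where "u = take n w" and "v = drop n w"
  have w: "w = u @ v" and "length u = n" "length v = n"
    using len by (simp_all add: u_def v_def)
  then have "v @ u = map Not u @ map Not v"
    using rot rotate_append[of u v] by simp
  moreover have "length v = length (map Not u)"
    using \<open>length u = n\<close> \<open>length v = n\<close> by simp
  ultimately have "v = map Not u"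
    using append_eq_append_conv by blast
  then show "w \<in> (\<lambda>u. u @ map Not u) ` {u. length u = n}"
    using w \<open>length u = n\<close> by blast
next
  fix w assume "w \<in> (\<lambda>u. u @ map Not u) ` {u. length u = n}"
  then obtain u where "length u = n" "w = u @ map Not u" by blast
  then show "w \<in> antiperiodic_words n"
    using rotate_append[of u "map Not u"] by (simp add: antiperiodic_words_def comp_def)
qed

lemma card_antiperiodic_words: "card (antiperiodic_words n) = 2 ^ n"
proof -
  have "inj_on (\<lambda>u. u @ map Not u) {u. length u = n}"
    by (rule inj_onI) simp
  then have "card (antiperiodic_words n) = card {u :: bool list. length u = n}"
    by (simp add: antiperiodic_words_eq_image card_image)
  also have "\<dots> = 2 ^ n"
    using card_lists_length_eq[of "UNIV :: bool set" n] by simp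
  finally show ?thesis .
qed

lemma finite_antiperiodic_words: "finite (antiperiodic_words n)"
  using card_antiperiodic_words[of n] by (intro card_ge_0_finite) simp

lemma rotation_period_antiperiodic:
  assumes "0 < n" "w \<in> antiperiodic_words n"
  obtains e where "rotation_period w = 2 * e" "e dvd n" "odd (n div e)"
proof -
  have len: "length w = 2 * n" and rot: "rotate n w = map Not w"
    using assms(2) by (auto simp: antiperiodic_words_def)
  have "w \<noteq> []" using len assms(1) by auto
  then obtain j where j: "2 * n = rotation_period w * j"
    using rotation_period_dvd_length len by (metis dvdE)
  have "rotate n w \<noteq> w"
    using rot \<open>w \<noteq> []\<close> by (cases w) auto
  then have "\<not> rotation_period w dvd n"
    using rotate_eq_self_iff[OF \<open>w \<noteq> []\<close>] by blast
  then have "odd j"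
    using j by (auto elim!: evenE)
  then obtain e where "rotation_period w = 2 * e"
    using j by (metis even_mult_iff evenE dvd_triv_left)
  moreover have "n = e * j" using j \<open>rotation_period w = 2 * e\<close> by simp
  ultimately show ?thesis
    using that \<open>odd j\<close> assms(1) by simp
qed

lemma rotate_antiperiod:
  assumes "e dvd n" "odd (n div e)" "length r = 2 * e"
  shows "rotate n r = rotate e r"
proof -
  obtain j where j: "n = e * j"
    using assms(1) by (rule dvdE)
  with assms(2) have "odd j"
    by (cases "e = 0") simp_all
  then obtain t where "j = 2 * t + 1"
    by (rule oddE)
  then have "n = e + t * length r"
    using j assms(3) by (simp add: algebra_simps)
  then have "rotate n r = rotate e (rotate (t * length r) r)"
    by (simp only: rotate_rotate)
  also have "rotate (t * length r) r = r"
    by simp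
  finally show ?thesis .
qed

lemma periodic_ext_antiperiodic_iff:
  assumes "e dvd n" "odd (n div e)" "length r = 2 * e"
  shows "periodic_ext (2 * n) r \<in> antiperiodic_words n \<longleftrightarrow> r \<in> antiperiodic_words e"
proof -
  have "0 < e" "0 < n"
    using assms(2) by (auto intro: Nat.gr0I)
  then have "length r dvd 2 * n" "length r \<le> 2 * n"
    using assms(1,3) by (auto intro: dvd_imp_le)
  moreover have "r \<noteq> []" using assms(3) \<open>0 < e\<close> by auto
  ultimately show ?thesis
    using assms by (simp add: antiperiodic_words_def rotate_periodic_ext map_periodic_ext
        rotate_antiperiod periodic_ext_eq_iff)
qed

definition antiperiodic_necklaces :: "nat \<Rightarrow> bool list set set" where
  "antiperiodic_necklaces n = rot_orbit ` primitive_antiperiodic_words n"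

lemma rotate_in_antiperiodic_words:
  "w \<in> antiperiodic_words n \<Longrightarrow> rotate k w \<in> antiperiodic_words n"
  unfolding antiperiodic_words_def
  by (metis (mono_tags) mem_Collect_eq length_rotate rotate_map rotate_rotate add.commute)

lemma card_primitive_antiperiodic_words:
  assumes "0 < n"
  shows "card (primitive_antiperiodic_words n) = 2 * n * card (antiperiodic_necklaces n)"
  unfolding antiperiodic_necklaces_def
proof (rule card_eq_rotation_period_times_card_orbits)
  show "finite (primitive_antiperiodic_words n)"
    using finite_antiperiodic_words by (simp add: primitive_antiperiodic_words_def)
  show "rotate k w \<in> primitive_antiperiodic_words n"
    if "w \<in> primitive_antiperiodic_words n" for w k
  proof -
    have "w \<noteq> []"
      using that assms by (auto simp: primitive_antiperiodic_words_def antiperiodic_words_def)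
    then show ?thesis
      using that by (simp add: primitive_antiperiodic_words_def rotate_in_antiperiodic_words
          rotation_period_rotate)
  qed
  show "w \<noteq> [] \<and> rotation_period w = 2 * n" if "w \<in> primitive_antiperiodic_words n" for w
    using that assms by (auto simp: primitive_antiperiodic_words_def antiperiodic_words_def)
qed

lemma card_antiperiodic_words_with_period:
  assumes "e dvd n" "odd (n div e)"
  shows "card {w \<in> antiperiodic_words n. rotation_period w = 2 * e}
    = card (primitive_antiperiodic_words e)"
proof -
  let ?A = "{w \<in> antiperiodic_words n. rotation_period w = 2 * e}"
  have "0 < e" "0 < n"
    using assms(2) by (auto intro: Nat.gr0I)
  then have "2 * e \<le> 2 * n"
    using assms(1) by (simp add: dvd_imp_le)
  have ext_take: "periodic_ext (2 * n) (take (2 * e) w) = w" "length (take (2 * e) w) = 2 * e"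
    if "w \<in> ?A" for w
  proof -
    have "w \<noteq> []" "length w = 2 * n"
      using that \<open>0 < n\<close> by (auto simp: antiperiodic_words_def)
    then show "periodic_ext (2 * n) (take (2 * e) w) = w" "length (take (2 * e) w) = 2 * e"
      using that assms(1) \<open>2 * e \<le> 2 * n\<close> periodic_ext_take[of "2 * e" w]
        rotate_eq_self_iff[of w "2 * e"] by simp_all
  qed
  have ext_in_iff: "periodic_ext (2 * n) r \<in> ?A \<longleftrightarrow> r \<in> primitive_antiperiodic_words e"
    if "length r = 2 * e" for r
  proof -
    have "r \<noteq> []" "length r dvd 2 * n"
      using that \<open>0 < e\<close> assms(1) by auto
    then show ?thesis
      using that assms \<open>0 < n\<close>
      by (simp add: periodic_ext_antiperiodic_iff rotation_period_periodic_ext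
          primitive_antiperiodic_words_def)
  qed
  have "bij_betw (take (2 * e)) ?A (primitive_antiperiodic_words e)"
  proof (rule bij_betw_byWitness[where f' = "periodic_ext (2 * n)"])
    show "\<forall>r\<in>primitive_antiperiodic_words e. take (2 * e) (periodic_ext (2 * n) r) = r"
      using take_periodic_ext[of _ "2 * n"] \<open>2 * e \<le> 2 * n\<close>
      by (metis (mono_tags, lifting) mem_Collect_eq primitive_antiperiodic_words_def
          antiperiodic_words_def)
    show "take (2 * e) ` ?A \<subseteq> primitive_antiperiodic_words e"
      using ext_take ext_in_iff by (metis (no_types, lifting) image_subsetI)
    show "periodic_ext (2 * n) ` primitive_antiperiodic_words e \<subseteq> ?A"
      using ext_in_iff by (auto simp: primitive_antiperiodic_words_def antiperiodic_words_def)
  qed (use ext_take in blast)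
  then show ?thesis
    by (rule bij_betw_same_card)
qed

lemma sum_card_antiperiodic_necklaces:
  assumes "0 < n"
  shows "(\<Sum>e | e dvd n \<and> odd (n div e). 2 * e * card (antiperiodic_necklaces e)) = 2 ^ n"
proof -
  let ?E = "{e. e dvd n \<and> odd (n div e)}"
  let ?A = "\<lambda>e. {w \<in> antiperiodic_words n. rotation_period w = 2 * e}"
  have "finite ?E"
    using assms by simp
  have "antiperiodic_words n \<subseteq> (\<Union>e\<in>?E. ?A e)"
  proof
    fix w assume "w \<in> antiperiodic_words n"
    then show "w \<in> (\<Union>e\<in>?E. ?A e)"
      using rotation_period_antiperiodic[OF assms]
      by (metis (mono_tags, lifting) UN_iff mem_Collect_eq)
  qed
  then have "antiperiodic_words n = (\<Union>e\<in>?E. ?A e)"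
    by blast
  then have "2 ^ n = card (\<Union>e\<in>?E. ?A e)"
    by (simp add: card_antiperiodic_words)
  also have "\<dots> = (\<Sum>e\<in>?E. card (?A e))"
    using \<open>finite ?E\<close> finite_antiperiodic_words by (intro card_UN_disjoint) auto
  also have "\<dots> = (\<Sum>e\<in>?E. 2 * e * card (antiperiodic_necklaces e))"
  proof (rule sum.cong)
    fix e assume "e \<in> ?E"
    then have "0 < e"
      by (auto intro: Nat.gr0I)
    with \<open>e \<in> ?E\<close> show "card (?A e) = 2 * e * card (antiperiodic_necklaces e)"
      by (simp add: card_antiperiodic_words_with_period card_primitive_antiperiodic_words)
  qed simp
  finally show ?thesis by simp
qed

lemma odd_sum_card_antiperiodic_necklaces_iff:
  assumes "odd m"
  shows "odd (\<Sum>g | g dvd m. card (antiperiodic_necklaces (2 ^ a * g))) \<longleftrightarrow> a \<le> 1 \<and> m = 1"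
proof -
  let ?N = "\<lambda>g. card (antiperiodic_necklaces (2 ^ a * g))"
  have "0 < m"
    using assms by (auto intro: Nat.gr0I)
  then have "finite {g. g dvd m}"
    by simp
  have "2 ^ (2 ^ a * m)
      = (\<Sum>e\<in>(\<lambda>g. 2 ^ a * g) ` {g. g dvd m}. 2 * e * card (antiperiodic_necklaces e))"
    using sum_card_antiperiodic_necklaces[of "2 ^ a * m"] \<open>0 < m\<close>
    by (simp add: odd_cofactor_divisors_eq_image[OF assms])
  also have "\<dots> = 2 ^ (a + 1) * (\<Sum>g | g dvd m. g * ?N g)"
    by (simp add: sum.reindex inj_on_def sum_distrib_left mult.assoc mult.left_commute)
  finally have "odd (\<Sum>g | g dvd m. g * ?N g) \<longleftrightarrow> 2 ^ a * m = a + 1"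
    by (intro power2_mult_eq_power2_odd_iff) simp
  moreover have "{g \<in> {g. g dvd m}. odd (g * ?N g)} = {g \<in> {g. g dvd m}. odd (?N g)}"
    using assms by (auto dest: dvd_trans[of 2])
  ultimately show ?thesis
    using \<open>finite {g. g dvd m}\<close> \<open>0 < m\<close> power2_mult_eq_Suc_iff by (simp add: even_sum_iff)
qed

lemma odd_card_antiperiodic_necklaces_iff:
  assumes "0 < d"
  shows "odd (card (antiperiodic_necklaces d)) \<longleftrightarrow> squarefree d"
proof -
  define a where "a = multiplicity 2 d"
  obtain m where d: "d = 2 ^ a * m" and "odd m"
    unfolding a_def by (rule multiplicity_decompose'[where x = d and p = 2]) (use assms in auto)
  have "0 < m"
    using \<open>odd m\<close> by (auto intro: Nat.gr0I)
  have "odd (card (antiperiodic_necklaces (2 ^ a * m))) \<longleftrightarrow> a \<le> 1 \<and> squarefree m"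
  proof (rule odd_iff_squarefree_if_odd_divisor_sums[OF \<open>0 < m\<close>])
    show "odd (\<Sum>g | g dvd k. card (antiperiodic_necklaces (2 ^ a * g)))
        \<longleftrightarrow> a \<le> 1 \<and> k = 1"
      if "k dvd m" for k
      using that \<open>odd m\<close>
      by (intro odd_sum_card_antiperiodic_necklaces_iff) (auto dest: dvd_trans[of 2])
  qed simp
  also have "\<dots> \<longleftrightarrow> squarefree (2 ^ a * m)"
    using squarefree_power2_mult_iff[OF \<open>odd m\<close>] by simp
  finally show ?thesis
    unfolding d .
qed

section \<open>Complementation of necklaces\<close>

lemma image_map_Not_rot_orbit: "map Not ` rot_orbit w = rot_orbit (map Not w)"
  unfolding rot_orbit_def by (auto simp: rotate_map)

lemma map_Not_in_balanced_words: "w \<in> balanced_words d \<Longrightarrow> map Not w \<in> balanced_words d"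
  using sum_length_filter_compl[of id w] by (auto simp: balanced_words_def comp_def)

lemma antiperiodic_words_subset_balanced_words:
  "antiperiodic_words d \<subseteq> balanced_words d"
proof
  fix w assume "w \<in> antiperiodic_words d"
  then have len: "length w = 2 * d" and rot: "rotate d w = map Not w"
    by (auto simp: antiperiodic_words_def)
  have "length (filter id w) = length (filter id (map Not w))"
    using length_filter_rotate[of id d w] rot by simp
  then show "w \<in> balanced_words d"
    using len sum_length_filter_compl[of id w] by (simp add: balanced_words_def comp_def)
qed

lemma primitive_necklaces_iff:
  assumes "0 < d"
  shows "N \<in> primitive_necklaces d \<longleftrightarrow>
    (\<exists>w \<in> balanced_words d. rotation_period w = 2 * d \<and> N = rot_orbit w)"
proof -
  have "w \<noteq> []" if "w \<in> balanced_words d" for w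
    using that assms by (auto simp: balanced_words_def)
  then show ?thesis
    unfolding primitive_necklaces_def necklaces_def using card_rot_orbit by auto
qed

lemma image_map_Not_primitive_necklace:
  assumes "0 < d" "N \<in> primitive_necklaces d"
  shows "map Not ` N \<in> primitive_necklaces d"
proof -
  obtain w where w: "w \<in> balanced_words d" "rotation_period w = 2 * d" "N = rot_orbit w"
    using assms primitive_necklaces_iff by blast
  then have "w \<noteq> []"
    using assms(1) by (auto simp: balanced_words_def)
  then have "rotation_period (map Not w) = 2 * d"
    using w(2) by (simp add: rotation_period_map_inj inj_def)
  then show ?thesis
    using assms(1) w map_Not_in_balanced_words primitive_necklaces_iff image_map_Not_rot_orbit
    by metis
qed

lemma complement_rotation_eq_half_period:
  assumes "rotation_period w = 2 * d" "w \<noteq> []" "map Not w = rotate k w" "k < 2 * d"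
  shows "k = d"
proof -
  have "rotate (k + k) w = rotate k (map Not w)"
    using assms(3) by (simp add: rotate_rotate)
  also have "\<dots> = map Not (map Not w)"
    by (simp only: rotate_map assms(3)[symmetric])
  also have "\<dots> = w"
    by (simp add: comp_def)
  finally have "d dvd k"
    using assms(1,2) by (simp add: rotate_eq_self_iff flip: mult_2)
  moreover have "map Not w \<noteq> w"
    using assms(2) by (cases w) auto
  then have "k \<noteq> 0"
    using assms(3) by (metis rotate0 id_apply)
  ultimately show ?thesis
    using assms(4) by (auto elim!: dvdE simp: less_Suc_eq mult_less_cancel1)
qed

lemma complement_fixed_primitive_necklaces:
  assumes "0 < d"
  shows "{N \<in> primitive_necklaces d. map Not ` N = N} = antiperiodic_necklaces d"
proof (intro set_eqI iffI)
  fix N assume "N \<in> {N \<in> primitive_necklaces d. map Not ` N = N}"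
  then have "N \<in> primitive_necklaces d" and fixed: "map Not ` N = N"
    by auto
  then obtain w where w: "w \<in> balanced_words d" "rotation_period w = 2 * d" "N = rot_orbit w"
    using primitive_necklaces_iff[OF assms] by blast
  have len: "length w = 2 * d" and "w \<noteq> []"
    using w(1) assms by (auto simp: balanced_words_def)
  have "map Not w \<in> rot_orbit w"
    using fixed w(3) self_in_rot_orbit[OF \<open>w \<noteq> []\<close>] by blast
  then obtain k where "k < 2 * d" "map Not w = rotate k w"
    using len by (auto simp: rot_orbit_def)
  then have "rotate d w = map Not w"
    using complement_rotation_eq_half_period[OF w(2) \<open>w \<noteq> []\<close>] by metis
  then have "w \<in> primitive_antiperiodic_words d"
    using len w(2) by (simp add: primitive_antiperiodic_words_def antiperiodic_words_def)
  then show "N \<in> antiperiodic_necklaces d"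
    using w(3) by (simp add: antiperiodic_necklaces_def)
next
  fix N assume "N \<in> antiperiodic_necklaces d"
  then obtain w where w: "w \<in> primitive_antiperiodic_words d" "N = rot_orbit w"
    by (auto simp: antiperiodic_necklaces_def)
  have len: "length w = 2 * d" and rot: "rotate d w = map Not w"
    and per: "rotation_period w = 2 * d"
    using w(1) by (auto simp: primitive_antiperiodic_words_def antiperiodic_words_def)
  have "w \<noteq> []"
    using len assms by auto
  have "w \<in> balanced_words d"
    using w(1) antiperiodic_words_subset_balanced_words
    by (auto simp: primitive_antiperiodic_words_def)
  moreover have "map Not ` N = N"
  proof -
    have "map Not ` N = rot_orbit (rotate d w)"
      using w(2) rot by (simp add: image_map_Not_rot_orbit)
    then show ?thesis
      using w(2) by (simp add: rot_orbit_rotate[OF \<open>w \<noteq> []\<close>])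
  qed
  ultimately show "N \<in> {N \<in> primitive_necklaces d. map Not ` N = N}"
    using w(2) per primitive_necklaces_iff[OF assms] by blast
qed

lemma finite_primitive_necklaces: "finite (primitive_necklaces d)"
proof -
  have "finite {w :: bool list. length w = 2 * d}"
    using finite_lists_length_eq[of "UNIV :: bool set" "2 * d"] by simp
  then have "finite (balanced_words d)"
    by (rule finite_subset[rotated]) (auto simp: balanced_words_def)
  then show ?thesis
    by (simp add: primitive_necklaces_def necklaces_def)
qed

theorem theorem2p5:
  fixes d :: nat
  assumes "d > 0"
  shows "odd (card (primitive_necklaces d)) \<longleftrightarrow> squarefree d"
proof -
  have "even (card (primitive_necklaces d))
      \<longleftrightarrow> even (card {N \<in> primitive_necklaces d. map Not ` N = N})"
    using assms finite_primitive_necklaces image_map_Not_primitive_necklace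
    by (intro even_card_iff_even_card_fixpoints) (auto simp: image_image comp_def)
  also have "\<dots> \<longleftrightarrow> even (card (antiperiodic_necklaces d))"
    using assms by (simp add: complement_fixed_primitive_necklaces)
  finally show ?thesis
    using odd_card_antiperiodic_necklaces_iff[OF assms] by simp
qed

end
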